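(* Let $X$ be a finite set, $k$ an integer with $1\le k\le|X|-1$, $\mathfrak{C}$ a nonempty symmetric family of choice functions for $\binom{X}{k}$, and $\mathcal{F}$ the set of (not necessarily simple) averaging functions for $\mathfrak{C}$, with $r(\mathcal{F})=2$. Assume that for every $Y\in\binom{X}{k}$ and all $a_1\ne a_2$ in $Y$ there is $f\in\mathcal{F}_{[2]}$ with $f_Y(a_1,a_2)=a_2$ and $f_Z(b_1,b_2)=b_1$ for all $Z\in\binom{X}{k}$ with $Z\ne Y$ and all $b_1,b_2\in Z$. Then $\mathfrak{C}$ is full, i.e. every choice function for $\binom{X}{k}$ belongs to $\mathfrak{C}$.
   Context: $\binom{X}{k}=\{Y\subseteq X:|Y|=k\}$; choice functions satisfy $c(Y)\in Y$. Symmetric: for every permutation $\pi$ of $X$ and $c\in\mathfrak{C}$, $(\pi*c)(Y)=\pi^{-1}(c(\pi(Y)))$ is in $\mathfrak{C}$. $\mathcal{F}_{[r]}$ is the set of families $f=\langle f_Y:Y\in\binom{X}{k}\rangle$ with $f_Y:Y^r\to Y$, $f_Y(x_1,\dots,x_r)\in\{x_1,\dots,x_r\}$, such that for all $c_1,\dots,c_r\in\mathfrak{C}$, $Y\mapsto f_Y(c_1(Y),\dots,c_r(Y))$ is in $\mathfrak{C}$; $\mathcal{F}=\bigcup_r\mathcal{F}_{[r]}$. $f\in\mathcal{F}_{[r]}$ is a monarchy if for some $t$, $f_Y(\bar x)=x_t$ for all $Y$ and $\bar x\in Y^r$. $r(\mathcal{F})=\min\{r\ge2:\text{some } f\in\mathcal{F}_{[r]}\text{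 is not a monarchy}\}$. Standing assumption: every simple $f\in\mathcal{F}$ (one with $f_Y$ the restriction of a single function independent of $Y$) is a monarchy. *)

theory Defs
  imports Main
begin

definition ksubsets :: "'a set \<Rightarrow> nat \<Rightarrow> 'a set set" where
  "ksubsets X k = {Y. Y \<subseteq> X \<and> card Y = k}"

text \<open>Choice functions for the k-subsets of X, made extensional
  (value undefined outside the domain) so that equality is meaningful.\<close>
definition choice_fun :: "'a set \<Rightarrow> nat \<Rightarrow> ('a set \<Rightarrow> 'a) \<Rightarrow> bool" where
  "choice_fun X k c \<longleftrightarrow>
     (\<forall>Y\<in>ksubsets X k. c Y \<in> Y) \<and> (\<forall>Y. Y \<notin> ksubsets X k \<longrightarrow> c Y = undefined)"

definition perm_act :: "'a set \<Rightarrow> nat \<Rightarrow> ('a \<Rightarrow> 'a) \<Rightarrow> ('a set \<Rightarrow> 'a) \<Rightarrow> ('a set \<Rightarrow> 'a)" where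
  "perm_act X k \<pi> c = (\<lambda>Y. if Y \<in> ksubsets X k then inv_into X \<pi> (c (\<pi> ` Y)) else undefined)"

definition symmetric_family :: "'a set \<Rightarrow> nat \<Rightarrow> ('a set \<Rightarrow> 'a) set \<Rightarrow> bool" where
  "symmetric_family X k C \<longleftrightarrow>
     (\<forall>\<pi> c. bij_betw \<pi> X X \<and> c \<in> C \<longrightarrow> perm_act X k \<pi> c \<in> C)"

text \<open>A family f = (f_Y) of r-ary functions is represented by
  f :: 'a set => 'a list => 'a; f Y xs with length xs = r and set xs \<subseteq> Y is f_Y(xs).
  averaging X k C r f  means  f \<in> F_[r].\<close>
definition averaging :: "'a set \<Rightarrow> nat \<Rightarrow> ('a set \<Rightarrow> 'a) set \<Rightarrow> nat \<Rightarrow> ('a set \<Rightarrow> 'a list \<Rightarrow> 'a) \<Rightarrow> bool" where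
  "averaging X k C r f \<longleftrightarrow>
     (\<forall>Y\<in>ksubsets X k. \<forall>xs. length xs = r \<and> set xs \<subseteq> Y \<longrightarrow> f Y xs \<in> set xs) \<and>
     (\<forall>cs. length cs = r \<and> set cs \<subseteq> C \<longrightarrow>
        (\<lambda>Y. if Y \<in> ksubsets X k then f Y (map (\<lambda>c. c Y) cs) else undefined) \<in> C)"

definition monarchy :: "'a set \<Rightarrow> nat \<Rightarrow> nat \<Rightarrow> ('a set \<Rightarrow> 'a list \<Rightarrow> 'a) \<Rightarrow> bool" where
  "monarchy X k r f \<longleftrightarrow>
     (\<exists>t<r. \<forall>Y\<in>ksubsets X k. \<forall>xs. length xs = r \<and> set xs \<subseteq> Y \<longrightarrow> f Y xs = xs ! t)"

definition simple :: "'a set \<Rightarrow> nat \<Rightarrow> nat \<Rightarrow> ('a set \<Rightarrow> 'a list \<Rightarrow> 'a) \<Rightarrow> bool" where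
  "simple X k r f \<longleftrightarrow>
     (\<exists>g. \<forall>Y\<in>ksubsets X k. \<forall>xs. length xs = r \<and> set xs \<subseteq> Y \<longrightarrow> f Y xs = g xs)"

definition rF :: "'a set \<Rightarrow> nat \<Rightarrow> ('a set \<Rightarrow> 'a) set \<Rightarrow> nat" where
  "rF X k C = (LEAST r. r \<ge> 2 \<and> (\<exists>f. averaging X k C r f \<and> \<not> monarchy X k r f))"

end

theory Submission
  imports Defs "HOL-Combinatorics.Transposition"
begin

text \<open>Acting on a member c of C by the transposition of a and c(Y) shows that every
  admissible value a at a single k-subset Y is attained by some member of C. The averaging
  function that copies its first argument everywhere except at Y, where it takes the second,
  then combines two members of C into a member that differs from the first one at Y only.
  Starting from any member of C and changing it one k-subset at a time reaches every choice
  function.\<close>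

lemma finite_ksubsets: "finite X \<Longrightarrow> finite (ksubsets X k)"
  unfolding ksubsets_def by (rule finite_subset[of _ "Pow X"]) auto

lemma choice_fun_in: "choice_fun X k c \<Longrightarrow> Y \<in> ksubsets X k \<Longrightarrow> c Y \<in> Y"
  by (simp add: choice_fun_def)

lemma perm_act_transpose_value:
  assumes "Y \<in> ksubsets X k" "a \<in> Y" "c Y \<in> Y"
  shows "perm_act X k (transpose a (c Y)) c Y = a"
proof -
  have "a \<in> X" using assms by (auto simp: ksubsets_def)
  then have "inv_into X (transpose a (c Y)) (c Y) = a"
    by (intro inv_into_f_eq) simp_all
  with assms show ?thesis by (simp add: perm_act_def)
qed

lemma symmetric_family_attains_value:
  assumes "symmetric_family X k C" "c \<in> C" "choice_fun X k c"
    and "Y \<in> ksubsets X k" "a \<in> Y"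
  shows "\<exists>c'\<in>C. c' Y = a"
proof
  have "c Y \<in> Y" using assms(3,4) by (rule choice_fun_in)
  then have "a \<in> X \<longleftrightarrow> c Y \<in> X" using assms(4,5) by (auto simp: ksubsets_def)
  then show "perm_act X k (transpose a (c Y)) c \<in> C"
    using assms(1,2) by (simp add: symmetric_family_def)
  show "perm_act X k (transpose a (c Y)) c Y = a"
    using assms(4,5) \<open>c Y \<in> Y\<close> by (rule perm_act_transpose_value)
qed

lemma averaging_combine:
  assumes "averaging X k C r f" "length cs = r" "set cs \<subseteq> C"
  shows "(\<lambda>Y. if Y \<in> ksubsets X k then f Y (map (\<lambda>c. c Y) cs) else undefined) \<in> C"
  using assms by (simp add: averaging_def)

lemma averaging_update:
  assumes choice: "\<forall>c\<in>C. choice_fun X k c"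
    and f: "averaging X k C 2 f"
    and first_off_Y: "\<forall>Z\<in>ksubsets X k. Z \<noteq> Y \<longrightarrow> (\<forall>b1\<in>Z. \<forall>b2\<in>Z. f Z [b1, b2] = b1)"
    and "c \<in> C" "c' \<in> C" "f Y [c Y, c' Y] = c' Y"
  shows "c(Y := c' Y) \<in> C"
proof -
  let ?g = "\<lambda>Z. if Z \<in> ksubsets X k then f Z (map (\<lambda>d. d Z) [c, c']) else undefined"
  have "?g \<in> C" using \<open>c \<in> C\<close> \<open>c' \<in> C\<close> by (intro averaging_combine[OF f]) auto
  moreover have "?g = c(Y := c' Y)"
  proof
    fix Z
    show "?g Z = (c(Y := c' Y)) Z"
    proof (cases "Z \<in> ksubsets X k")
      case True
      then have "c Z \<in> Z" "c' Z \<in> Z"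
        using choice \<open>c \<in> C\<close> \<open>c' \<in> C\<close> by (auto intro: choice_fun_in)
      with True first_off_Y \<open>f Y [c Y, c' Y] = c' Y\<close> show ?thesis by auto
    next
      case False
      then have "c Z = undefined" "c' Z = undefined"
        using choice \<open>c \<in> C\<close> \<open>c' \<in> C\<close> by (auto simp: choice_fun_def)
      with False show ?thesis by auto
    qed
  qed
  ultimately show ?thesis by simp
qed

lemma full_if_closed_under_update:
  assumes "finite X" "c0 \<in> C" "choice_fun X k c0"
    and update: "\<And>c Y a. c \<in> C \<Longrightarrow> Y \<in> ksubsets X k \<Longrightarrow> a \<in> Y \<Longrightarrow> c(Y := a) \<in> C"
    and d: "choice_fun X k d"
  shows "d \<in> C"
proof -
  have "(\<lambda>Z. if Z \<in> S then d Z else c0 Z) \<in> C" if "finite S" "S \<subseteq> ksubsets X k" for S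
    using that
  proof (induction S rule: finite_induct)
    case empty
    with \<open>c0 \<in> C\<close> show ?case by simp
  next
    case (insert Y S)
    then have "Y \<in> ksubsets X k" by simp
    then have "((\<lambda>Z. if Z \<in> S then d Z else c0 Z)(Y := d Y)) \<in> C"
      using insert d by (intro update) (auto intro: choice_fun_in)
    moreover have "(\<lambda>Z. if Z \<in> S then d Z else c0 Z)(Y := d Y)
        = (\<lambda>Z. if Z \<in> insert Y S then d Z else c0 Z)"
      by auto
    ultimately show ?case by simp
  qed
  from this[OF finite_ksubsets[OF \<open>finite X\<close>]]
  have "(\<lambda>Z. if Z \<in> ksubsets X k then d Z else c0 Z) \<in> C" by simp
  moreover have "(\<lambda>Z. if Z \<in> ksubsets X k then d Z else c0 Z) = d"
    using \<open>choice_fun X k c0\<close> d by (auto simp: choice_fun_def)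
  ultimately show ?thesis by simp
qed

lemma symmetric_family_closed_under_update:
  assumes choice: "\<forall>c\<in>C. choice_fun X k c"
    and sym: "symmetric_family X k C"
    and "c0 \<in> C"
    and first_except_at: "\<forall>Y\<in>ksubsets X k. \<forall>a1\<in>Y. \<forall>a2\<in>Y. a1 \<noteq> a2 \<longrightarrow>
           (\<exists>f. averaging X k C 2 f \<and> f Y [a1, a2] = a2 \<and>
              (\<forall>Z\<in>ksubsets X k. Z \<noteq> Y \<longrightarrow> (\<forall>b1\<in>Z. \<forall>b2\<in>Z. f Z [b1, b2] = b1)))"
    and c: "c \<in> C" and Y: "Y \<in> ksubsets X k" and a: "a \<in> Y"
  shows "c(Y := a) \<in> C"
proof (cases "c Y = a")
  case True
  with c show ?thesis by (metis fun_upd_triv)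
next
  case False
  obtain c' where "c' \<in> C" "c' Y = a"
    using symmetric_family_attains_value[OF sym \<open>c0 \<in> C\<close>] choice \<open>c0 \<in> C\<close> Y a by blast
  moreover have "c Y \<in> Y" using choice c Y by (auto intro: choice_fun_in)
  ultimately obtain f where "averaging X k C 2 f" "f Y [c Y, c' Y] = c' Y"
    "\<forall>Z\<in>ksubsets X k. Z \<noteq> Y \<longrightarrow> (\<forall>b1\<in>Z. \<forall>b2\<in>Z. f Z [b1, b2] = b1)"
    using first_except_at Y a False by metis
  with choice c \<open>c' \<in> C\<close> \<open>c' Y = a\<close> show ?thesis
    by (metis averaging_update)
qed

theorem claim14p20:
  fixes X :: "'a set" and k :: nat and C :: "('a set \<Rightarrow> 'a) set"
  assumes "finite X"
    and "1 \<le> k" and "k \<le> card X - 1"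
    and "C \<noteq> {}"
    and "\<forall>c\<in>C. choice_fun X k c"
    and "symmetric_family X k C"
    and "\<forall>r f. averaging X k C r f \<and> simple X k r f \<longrightarrow> monarchy X k r f"
    and "rF X k C = 2"
    and "\<forall>Y\<in>ksubsets X k. \<forall>a1\<in>Y. \<forall>a2\<in>Y. a1 \<noteq> a2 \<longrightarrow>
           (\<exists>f. averaging X k C 2 f \<and> f Y [a1, a2] = a2 \<and>
              (\<forall>Z\<in>ksubsets X k. Z \<noteq> Y \<longrightarrow> (\<forall>b1\<in>Z. \<forall>b2\<in>Z. f Z [b1, b2] = b1)))"
  shows "\<forall>c. choice_fun X k c \<longrightarrow> c \<in> C"
proof -
  obtain c0 where "c0 \<in> C" using assms(4) by blast
  have "c(Y := a) \<in> C" if "c \<in> C" "Y \<in> ksubsets X k" "a \<in> Y" for c Y a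
    using symmetric_family_closed_under_update[OF assms(5,6) \<open>c0 \<in> C\<close> assms(9)] that .
  with assms(1,5) \<open>c0 \<in> C\<close> show ?thesis
    by (blast intro: full_if_closed_under_update)
qed

end
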